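(* Let $\mathcal{H}$ be a complex Hilbert space and let $A\in\mathcal{B}(\mathcal{H})$ be nonzero. Then \[ \|A\|\left(1-\frac12\left\|I-\frac{A}{\|A\|}\right\|^2\right)\le \omega(A). \]
   Context: $\mathcal{B}(\mathcal{H})$ denotes the algebra of bounded linear operators on $\mathcal{H}$, $I$ the identity operator; $\omega(A)=\sup_{\|x\|=1}|\langle Ax,x\rangle|$ is the numerical radius and $\|\cdot\|$ the operator norm. *)

theory Defs
  imports "HOL-Analysis.Analysis"
begin

text \<open>Complex inner product spaces (not in the distribution): a real normed vector space
  with a complex scalar multiplication compatible with the real one, and a complex inner
  product, linear in the first argument and conjugate-linear in the second, inducing the norm.\<close>

class complex_inner = real_normed_vector +
  fixes cscale :: "complex \<Rightarrow> 'a \<Rightarrow> 'a"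
    and cinner :: "'a \<Rightarrow> 'a \<Rightarrow> complex"
  assumes cscale_add_right: "cscale c (x + y) = cscale c x + cscale c y"
    and cscale_add_left: "cscale (c + d) x = cscale c x + cscale d x"
    and cscale_cscale: "cscale c (cscale d x) = cscale (c * d) x"
    and cscale_one: "cscale 1 x = x"
    and scaleR_cscale: "scaleR r x = cscale (complex_of_real r) x"
    and cinner_add_left: "cinner (x + y) z = cinner x z + cinner y z"
    and cinner_cscale_left: "cinner (cscale c x) y = c * cinner x y"
    and cinner_commute: "cinner y x = cnj (cinner x y)"
    and cinner_self_real: "Im (cinner x x) = 0"
    and cinner_self_nonneg: "0 \<le> Re (cinner x x)"
    and cinner_self_eq_0: "cinner x x = 0 \<longleftrightarrow> x = 0"
    and norm_eq_sqrt_cinner: "norm x = sqrt (Re (cinner x x))"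

class complex_hilbert = complex_inner + complete_space

definition bounded_operator :: "('a::complex_inner \<Rightarrow> 'a) \<Rightarrow> bool" where
  "bounded_operator A \<longleftrightarrow>
     (\<forall>x y. A (x + y) = A x + A y) \<and>
     (\<forall>c x. A (cscale c x) = cscale c (A x)) \<and>
     (\<exists>K. \<forall>x. norm (A x) \<le> norm x * K)"

definition numerical_radius :: "('a::complex_inner \<Rightarrow> 'a) \<Rightarrow> real" where
  "numerical_radius A = (SUP x\<in>{x. norm x = 1}. cmod (cinner (A x) x))"

end

theory Submission
  imports Defs
begin

text \<open>Write a = ||A||, w = \<omega>(A) and N = ||I - A/a||. For a unit vector x, expanding the square
  gives ||x - Ax/a||^2 = 1 - 2 Re<Ax,x>/a + ||Ax||^2/a^2, and Re<Ax,x> \<le> w, so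
  ||Ax||^2 \<le> 2aw + a^2 (N^2 - 1). Taking the supremum over unit vectors turns the left side
  into a^2, which rearranges to a (1 - N^2/2) \<le> w.\<close>

lemma cinner_minus_left: "cinner (- x) y = - cinner x y"
  using cinner_cscale_left[of "complex_of_real (-1)" x y] scaleR_cscale[of "-1" x] by simp

lemma cinner_diff_left: "cinner (x - y) z = cinner x z - cinner y z"
  using cinner_add_left[of x "- y" z] cinner_minus_left[of y z] by simp

lemma cinner_diff_right: "cinner z (x - y) = cinner z x - cinner z y"
  by (metis cinner_commute cinner_diff_left complex_cnj_diff)

lemma cinner_cscale_right: "cinner x (cscale c y) = cnj c * cinner x y"
  by (metis cinner_commute cinner_cscale_left complex_cnj_mult)

lemma cinner_scaleR_left: "cinner (r *\<^sub>R x) y = complex_of_real r * cinner x y"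
  by (simp add: scaleR_cscale cinner_cscale_left)

lemma Re_cinner_commute: "Re (cinner y x) = Re (cinner x y)"
  using cinner_commute[of x y] by simp

lemma power2_norm_eq_cinner: "(norm x)\<^sup>2 = Re (cinner x x)"
  using norm_eq_sqrt_cinner[of x] cinner_self_nonneg[of x] by simp

lemma power2_norm_diff: "(norm (x - y))\<^sup>2 = (norm x)\<^sup>2 - 2 * Re (cinner x y) + (norm y)\<^sup>2"
  unfolding power2_norm_eq_cinner cinner_diff_left cinner_diff_right
  using Re_cinner_commute[of x y] by simp

lemma power2_norm_add: "(norm (x + y))\<^sup>2 = (norm x)\<^sup>2 + 2 * Re (cinner x y) + (norm y)\<^sup>2"
  using power2_norm_diff[of x "- y"] cinner_minus_left[of y x] Re_cinner_commute[of "- y" x]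
    Re_cinner_commute[of y x]
  by simp

lemma power2_norm_diff_scaleR:
  "(norm (x - r *\<^sub>R y))\<^sup>2 = (norm x)\<^sup>2 - 2 * r * Re (cinner y x) + r\<^sup>2 * (norm y)\<^sup>2"
  using power2_norm_diff[of x "r *\<^sub>R y"] Re_cinner_commute[of x "r *\<^sub>R y"]
  by (simp add: cinner_scaleR_left power_mult_distrib)

lemma abs_Re_cinner_le: "\<bar>Re (cinner x y)\<bar> \<le> ((norm x)\<^sup>2 + (norm y)\<^sup>2) / 2"
proof -
  have "0 \<le> (norm (x - y))\<^sup>2" and "0 \<le> (norm (x + y))\<^sup>2"
    by simp_all
  then show ?thesis
    unfolding power2_norm_diff power2_norm_add abs_le_iff by simp
qed

lemma norm_cscale: "norm (cscale c x) = cmod c * norm x"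
proof -
  have "cinner (cscale c x) (cscale c x) = (c * cnj c) * cinner x x"
    by (simp add: cinner_cscale_left cinner_cscale_right mult.assoc)
  also have "\<dots> = complex_of_real ((cmod c)\<^sup>2 * Re (cinner x x))"
    using cinner_self_real[of x] by (simp add: complex_norm_square[symmetric] complex_eq_iff)
  finally have "(norm (cscale c x))\<^sup>2 = (cmod c * norm x)\<^sup>2"
    by (simp add: power2_norm_eq_cinner power_mult_distrib)
  then show ?thesis by simp
qed

text \<open>Bound the imaginary part as the real part of \<langle>-i x, y\<rangle>.\<close>

lemma cmod_cinner_le: "cmod (cinner x y) \<le> (norm x)\<^sup>2 + (norm y)\<^sup>2"
proof -
  have "Im (cinner x y) = Re (cinner (cscale (- \<i>) x) y)"
    using cinner_cscale_left[of "- \<i>" x y] by simp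
  moreover have "norm (cscale (- \<i>) x) = norm x"
    using norm_cscale[of "- \<i>" x] by simp
  ultimately have "\<bar>Im (cinner x y)\<bar> \<le> ((norm x)\<^sup>2 + (norm y)\<^sup>2) / 2"
    using abs_Re_cinner_le[of "cscale (- \<i>) x" y] by simp
  then show ?thesis
    using cmod_le[of "cinner x y"] abs_Re_cinner_le[of x y] by simp
qed

lemma bounded_operator_imp_bounded_linear:
  assumes "bounded_operator A"
  shows "bounded_linear A"
proof -
  from assms obtain K where "\<And>x y. A (x + y) = A x + A y"
    and "\<And>c x. A (cscale c x) = cscale c (A x)" and "\<And>x. norm (A x) \<le> norm x * K"
    unfolding bounded_operator_def by blast
  then show ?thesis
    by (intro bounded_linear_intro) (auto simp: scaleR_cscale)
qed

lemma cmod_cinner_le_numerical_radius: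
  fixes A :: "'a::complex_inner \<Rightarrow> 'a"
  assumes "bounded_linear A" and "norm x = 1"
  shows "cmod (cinner (A x) x) \<le> numerical_radius A"
  unfolding numerical_radius_def
proof (rule cSUP_upper)
  show "bdd_above ((\<lambda>x. cmod (cinner (A x) x)) ` {x. norm x = 1})"
  proof (rule bdd_aboveI2)
    fix y :: 'a assume "y \<in> {x. norm x = 1}"
    then have "norm (A y) \<le> onorm A" and "norm y = 1"
      using onorm[OF assms(1), of y] by auto
    then have "(norm (A y))\<^sup>2 \<le> (onorm A)\<^sup>2"
      by (simp add: power_mono)
    then show "cmod (cinner (A y) y) \<le> (onorm A)\<^sup>2 + 1"
      using cmod_cinner_le[of "A y" y] \<open>norm y = 1\<close> by simp
  qed
qed (use assms(2) in simp)

lemma power2_onorm_le: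
  fixes f :: "'a::real_normed_vector \<Rightarrow> 'b::real_normed_vector"
  assumes f: "bounded_linear f" and "f \<noteq> (\<lambda>x. 0)"
    and bound: "\<And>x. norm x = 1 \<Longrightarrow> (norm (f x))\<^sup>2 \<le> s"
  shows "(onorm f)\<^sup>2 \<le> s"
proof -
  have unit_bound: "norm (f x) \<le> sqrt s" if "norm x = 1" for x
    using bound[OF that] real_le_rsqrt by blast
  have scaled: "norm (f (x /\<^sub>R norm x)) = norm (f x) / norm x" for x
    by (simp add: linear.scaleR[OF bounded_linear.linear[OF f]] divide_inverse)
  obtain x0 where "f x0 \<noteq> 0"
    using assms(2) by blast
  then have "x0 \<noteq> 0"
    using linear_0[OF bounded_linear.linear[OF f]] by auto
  then have "(norm (f (x0 /\<^sub>R norm x0)))\<^sup>2 \<le> s"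
    by (intro bound) simp
  then have "0 \<le> s"
    using zero_le_power2 order_trans by blast
  have "onorm f \<le> sqrt s"
  proof (rule onorm_bound)
    show "0 \<le> sqrt s"
      using \<open>0 \<le> s\<close> by simp
  next
    fix x
    show "norm (f x) \<le> sqrt s * norm x"
    proof (cases "x = 0")
      case True
      then show ?thesis using linear_0[OF bounded_linear.linear[OF f]] by simp
    next
      case False
      then have "norm (f x) / norm x \<le> sqrt s"
        using unit_bound[of "x /\<^sub>R norm x"] scaled[of x] by simp
      then show ?thesis
        using False by (simp add: divide_le_eq)
    qed
  qed
  then have "(onorm f)\<^sup>2 \<le> (sqrt s)\<^sup>2"
    using onorm_pos_le[OF f] by (simp add: power_mono)
  then show ?thesis
    using \<open>0 \<le> s\<close> by simp
qed

lemma power2_norm_le_numerical_radius: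
  fixes A :: "'a::complex_inner \<Rightarrow> 'a"
  assumes A: "bounded_linear A" and "0 < c" and "norm x = 1"
  defines "N \<equiv> onorm (\<lambda>x. x - cscale (complex_of_real (1 / c)) (A x))"
  shows "(norm (A x))\<^sup>2 \<le> 2 * c * numerical_radius A + c\<^sup>2 * (N\<^sup>2 - 1)"
proof -
  have scale: "cscale (complex_of_real (1 / c)) y = (1 / c) *\<^sub>R y" for y :: 'a
    by (simp add: scaleR_cscale)
  have "bounded_linear (\<lambda>x. x - (1 / c) *\<^sub>R A x)"
    by (intro bounded_linear_sub bounded_linear_ident
        bounded_linear_compose[OF bounded_linear_scaleR_right A])
  moreover have "N = onorm (\<lambda>x. x - (1 / c) *\<^sub>R A x)"
    unfolding N_def scale ..
  ultimately have "norm (x - (1 / c) *\<^sub>R A x) \<le> N"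
    using onorm[of "\<lambda>x. x - (1 / c) *\<^sub>R A x" x] \<open>norm x = 1\<close> by simp
  then have "c\<^sup>2 * (norm (x - (1 / c) *\<^sub>R A x))\<^sup>2 \<le> c\<^sup>2 * N\<^sup>2"
    by (simp add: power_mono mult_left_mono)
  moreover have "c\<^sup>2 * (norm (x - (1 / c) *\<^sub>R A x))\<^sup>2
      = c\<^sup>2 - 2 * c * Re (cinner (A x) x) + (norm (A x))\<^sup>2"
    using power2_norm_diff_scaleR[of x "1 / c" "A x"] \<open>norm x = 1\<close> \<open>0 < c\<close>
    by (simp add: field_simps power2_eq_square)
  moreover have "Re (cinner (A x) x) \<le> numerical_radius A"
    using complex_Re_le_cmod cmod_cinner_le_numerical_radius[OF A \<open>norm x = 1\<close>] order_trans
    by blast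
  then have "2 * c * Re (cinner (A x) x) \<le> 2 * c * numerical_radius A"
    using \<open>0 < c\<close> by simp
  ultimately show ?thesis
    by (simp add: algebra_simps)
qed

theorem theorem3p1:
  fixes A :: "'a::complex_hilbert \<Rightarrow> 'a"
  assumes "bounded_operator A"
    and "A \<noteq> (\<lambda>x. 0)"
  shows "onorm A * (1 - (1/2) * (onorm (\<lambda>x. x - cscale (complex_of_real (1 / onorm A)) (A x)))^2)
           \<le> numerical_radius A"
proof -
  define a where "a = onorm A"
  define N where "N = onorm (\<lambda>x. x - cscale (complex_of_real (1 / a)) (A x))"
  have A: "bounded_linear A"
    using assms(1) by (rule bounded_operator_imp_bounded_linear)
  then have "0 < a"
    unfolding a_def using onorm_pos_lt assms(2) by blast
  then have "a\<^sup>2 \<le> 2 * a * numerical_radius A + a\<^sup>2 * (N\<^sup>2 - 1)"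
    unfolding a_def N_def
    using power2_onorm_le[OF A assms(2)] power2_norm_le_numerical_radius[OF A] by blast
  then have "a * a \<le> a * (2 * numerical_radius A + a * (N\<^sup>2 - 1))"
    by (simp add: power2_eq_square algebra_simps)
  then have "a \<le> 2 * numerical_radius A + a * (N\<^sup>2 - 1)"
    using \<open>0 < a\<close> by simp
  then show ?thesis
    unfolding a_def[symmetric] N_def[symmetric] by (simp add: algebra_simps)
qed

end
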